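(* A poset $(\Lambda,\le)$ is interval-finite and good if and only if every finitely generated ideal $\Gamma\subseteq\Lambda$ has a descending chain of finitely generated subideals $\Gamma=\Gamma_0\supseteq\Gamma_1\supseteq\Gamma_2\supseteq\cdots$ such that $|\Gamma_k\setminus\Gamma_{k+1}|<\infty$ for every $k\ge0$ and $\bigcap_{k\ge0}\Gamma_k=\emptyset$. Moreover, this chain can be chosen so that for each $k\ge0$ the elements of $\Gamma_k\setminus\Gamma_{k+1}$ are pairwise incomparable generators of $\Gamma_k$.
   Context: For a poset, $(\gamma]=\{\mu\mid\mu\le\gamma\}$; an ideal is a downward closed subset, finitely generated if it is $\bigcup_{i=1}^t(\lambda_i]$ for finitely many $\lambda_i$; a generator of an ideal $\Gamma$ is an element of a generating set. Interval-finite means every closed interval $[\mu,\lambda]$ is finite. An element $\mu$ is a predecessor of $\lambda$ if $\mu<\lambda$ and there is no $\pi$ with $\mu<\pi<\lambda$. A poset is good if (1) each non-minimal element has at least one but only finitely many predecessors, and (2) whenever $\mu<\lambda$ there is a predecessor $\lambda'$ of $\lambda$ with $\mu\le\lambda'$. *)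

theory Defs
  imports Main
begin

definition down :: "'a::order set \<Rightarrow> 'a \<Rightarrow> 'a set" where
  "down L g = {m \<in> L. m \<le> g}"

definition is_ideal :: "'a::order set \<Rightarrow> 'a set \<Rightarrow> bool" where
  "is_ideal L G \<longleftrightarrow> G \<subseteq> L \<and> (\<forall>x\<in>G. \<forall>y\<in>L. y \<le> x \<longrightarrow> y \<in> G)"

definition generates :: "'a::order set \<Rightarrow> 'a set \<Rightarrow> 'a set \<Rightarrow> bool" where
  "generates L S G \<longleftrightarrow> finite S \<and> S \<subseteq> L \<and> G = (\<Union>g\<in>S. down L g)"

definition fin_gen_ideal :: "'a::order set \<Rightarrow> 'a set \<Rightarrow> bool" where
  "fin_gen_ideal L G \<longleftrightarrow> is_ideal L G \<and> (\<exists>S. generates L S G)"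

definition is_generator :: "'a::order set \<Rightarrow> 'a set \<Rightarrow> 'a \<Rightarrow> bool" where
  "is_generator L G x \<longleftrightarrow> (\<exists>S. generates L S G \<and> x \<in> S)"

definition interval_finite :: "'a::order set \<Rightarrow> bool" where
  "interval_finite L \<longleftrightarrow> (\<forall>m\<in>L. \<forall>l\<in>L. finite {p \<in> L. m \<le> p \<and> p \<le> l})"

definition is_pred :: "'a::order set \<Rightarrow> 'a \<Rightarrow> 'a \<Rightarrow> bool" where
  "is_pred L m l \<longleftrightarrow> m \<in> L \<and> l \<in> L \<and> m < l \<and> \<not> (\<exists>p\<in>L. m < p \<and> p < l)"

definition good :: "'a::order set \<Rightarrow> bool" where
  "good L \<longleftrightarrow>
     (\<forall>l\<in>L. (\<exists>m\<in>L. m < l) \<longrightarrow> (\<exists>m. is_pred L m l) \<and> finite {m. is_pred L m l}) \<and>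
     (\<forall>m\<in>L. \<forall>l\<in>L. m < l \<longrightarrow> (\<exists>l'. is_pred L l' l \<and> m \<le> l'))"

definition exhausting_chain :: "'a::order set \<Rightarrow> 'a set \<Rightarrow> (nat \<Rightarrow> 'a set) \<Rightarrow> bool" where
  "exhausting_chain L G \<Gamma> \<longleftrightarrow>
     \<Gamma> 0 = G \<and>
     (\<forall>k. fin_gen_ideal L (\<Gamma> k) \<and> \<Gamma> (Suc k) \<subseteq> \<Gamma> k \<and> finite (\<Gamma> k - \<Gamma> (Suc k))) \<and>
     (\<Inter>k. \<Gamma> k) = {}"

end

theory Submission
  imports Defs
begin

text \<open>For the forward direction, peel off the maximal elements repeatedly:
  \<Gamma>(k+1) = \<Gamma>(k) - max \<Gamma>(k). The maximal elements of a finitely generated ideal are finitely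
  many pairwise incomparable generators, and by goodness what remains is generated by their
  (finitely many) predecessors. An element x surviving every step would give a strictly
  decreasing sequence of subsets of the finite set {y \<in> G. x \<le> y}, which interval-finiteness
  rules out. Conversely, if G = (l] has an exhausting chain and x \<notin> \<Gamma>(n), then everything
  between x and l lies in the finite set G - \<Gamma>(n), and for x = l every predecessor of l lies
  either there or among the finitely many generators of \<Gamma>(n).\<close>

definition maximals :: "'a::order set \<Rightarrow> 'a set" where
  "maximals A = {x \<in> A. \<not> (\<exists>y\<in>A. x < y)}"

lemma maximals_subset: "maximals A \<subseteq> A"
  unfolding maximals_def by blast

lemma maximals_antichain: "x \<in> maximals A \<Longrightarrow> y \<in> maximals A \<Longrightarrow> x \<le> y \<Longrightarrow> x = y"
  unfolding maximals_def by (auto simp: order_less_le)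

lemma is_ideal_Union_down: "P \<subseteq> L \<Longrightarrow> is_ideal L (\<Union>p\<in>P. down L p)"
  unfolding is_ideal_def down_def by (auto intro: order_trans)

lemma fin_gen_ideal_Union_down:
  "finite P \<Longrightarrow> P \<subseteq> L \<Longrightarrow> fin_gen_ideal L (\<Union>p\<in>P. down L p)"
  unfolding fin_gen_ideal_def generates_def using is_ideal_Union_down by blast

lemma fin_gen_ideal_down: "l \<in> L \<Longrightarrow> fin_gen_ideal L (down L l)"
  using fin_gen_ideal_Union_down[of "{l}" L] by simp

lemma fin_gen_ideal_subset: "fin_gen_ideal L A \<Longrightarrow> A \<subseteq> L"
  unfolding fin_gen_ideal_def is_ideal_def by blast

lemma fin_gen_ideal_down_closed:
  "fin_gen_ideal L A \<Longrightarrow> x \<in> A \<Longrightarrow> y \<in> L \<Longrightarrow> y \<le> x \<Longrightarrow> y \<in> A"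
  unfolding fin_gen_ideal_def is_ideal_def by blast

lemma maximals_subset_generators:
  assumes S: "generates L S A"
  shows "maximals A \<subseteq> S"
proof
  fix x assume x: "x \<in> maximals A"
  then obtain s where s: "s \<in> S" "x \<le> s"
    using S maximals_subset unfolding generates_def down_def by blast
  with S have "s \<in> A" unfolding generates_def down_def by auto
  with x s show "x \<in> S" unfolding maximals_def by (auto simp: order_less_le)
qed

lemma generates_below_maximal:
  assumes S: "generates L S A" and x: "x \<in> A"
  shows "\<exists>m\<in>maximals A. x \<le> m"
proof -
  obtain s where s: "s \<in> S" "x \<le> s"
    using S x unfolding generates_def down_def by blast
  obtain m where m: "m \<in> S" "s \<le> m" and m_max: "\<And>b. b \<in> S \<Longrightarrow> m \<le> b \<Longrightarrow> m = b"
    using finite_has_maximal2[OF _ s(1)] S unfolding generates_def by blast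
  have "m \<in> A" using S m(1) unfolding generates_def down_def by auto
  moreover have "\<not> m < y" if "y \<in> A" for y
  proof
    assume "m < y"
    obtain s' where "s' \<in> S" "y \<le> s'"
      using S \<open>y \<in> A\<close> unfolding generates_def down_def by blast
    with \<open>m < y\<close> m_max show False by (metis order_less_le_trans order_less_irrefl order_less_imp_le)
  qed
  ultimately have "m \<in> maximals A" unfolding maximals_def by blast
  with s m show ?thesis by (meson order_trans)
qed

lemma fin_gen_ideal_below_maximal:
  "fin_gen_ideal L A \<Longrightarrow> x \<in> A \<Longrightarrow> \<exists>m\<in>maximals A. x \<le> m"
  unfolding fin_gen_ideal_def using generates_below_maximal by blast

lemma fin_gen_ideal_generates_maximals:
  assumes A: "fin_gen_ideal L A"
  shows "generates L (maximals A) A"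
proof -
  obtain S where S: "generates L S A" using A unfolding fin_gen_ideal_def by blast
  have "finite (maximals A)" "maximals A \<subseteq> L"
    using maximals_subset_generators[OF S] S unfolding generates_def by (auto intro: finite_subset)
  moreover have "A = (\<Union>m\<in>maximals A. down L m)"
  proof
    show "A \<subseteq> (\<Union>m\<in>maximals A. down L m)"
      using generates_below_maximal[OF S] fin_gen_ideal_subset[OF A] unfolding down_def by blast
    show "(\<Union>m\<in>maximals A. down L m) \<subseteq> A"
      using fin_gen_ideal_down_closed[OF A] maximals_subset unfolding down_def by blast
  qed
  ultimately show ?thesis unfolding generates_def by blast
qed

lemma fin_gen_ideal_maximal_is_generator:
  "fin_gen_ideal L A \<Longrightarrow> x \<in> maximals A \<Longrightarrow> is_generator L A x"
  unfolding is_generator_def using fin_gen_ideal_generates_maximals by blast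

lemma interval_finite_finite_above:
  assumes ifin: "interval_finite L" and G: "fin_gen_ideal L G" and x: "x \<in> L"
  shows "finite {y \<in> G. x \<le> y}"
proof -
  have M: "generates L (maximals G) G" by (rule fin_gen_ideal_generates_maximals[OF G])
  have "{y \<in> G. x \<le> y} \<subseteq> (\<Union>s\<in>maximals G. {p \<in> L. x \<le> p \<and> p \<le> s})"
    using M unfolding generates_def down_def by blast
  moreover have "finite (\<Union>s\<in>maximals G. {p \<in> L. x \<le> p \<and> p \<le> s})"
    using M ifin x unfolding generates_def interval_finite_def by blast
  ultimately show ?thesis by (rule finite_subset)
qed

lemma good_finite_preds:
  assumes "good L" "l \<in> L" shows "finite {m. is_pred L m l}"
proof (cases "\<exists>m\<in>L. m < l")
  case True with assms show ?thesis unfolding good_def by blast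
next
  case False then have empty: "{m. is_pred L m l} = {}" unfolding is_pred_def by blast
  show ?thesis unfolding empty by simp
qed

lemma good_Diff_maximals:
  assumes g: "good L" and A: "fin_gen_ideal L A"
  shows "fin_gen_ideal L (A - maximals A)"
proof -
  have M: "generates L (maximals A) A" by (rule fin_gen_ideal_generates_maximals[OF A])
  define P where "P = (\<Union>s\<in>maximals A. {m. is_pred L m s})"
  have "finite P" "P \<subseteq> L"
    using M good_finite_preds[OF g] unfolding P_def generates_def is_pred_def by auto
  moreover have "A - maximals A = (\<Union>p\<in>P. down L p)"
  proof
    show "A - maximals A \<subseteq> (\<Union>p\<in>P. down L p)"
    proof
      fix x assume x: "x \<in> A - maximals A"
      then obtain s where s: "s \<in> maximals A" "x < s"
        using fin_gen_ideal_below_maximal[OF A] by (metis DiffE order_less_le)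
      moreover have "x \<in> L" "s \<in> L" using x s M unfolding generates_def down_def by auto
      ultimately obtain l' where "is_pred L l' s" "x \<le> l'" using g unfolding good_def by blast
      with s \<open>x \<in> L\<close> show "x \<in> (\<Union>p\<in>P. down L p)" unfolding P_def down_def by blast
    qed
  next
    show "(\<Union>p\<in>P. down L p) \<subseteq> A - maximals A"
    proof
      fix y assume "y \<in> (\<Union>p\<in>P. down L p)"
      then obtain p s where s: "s \<in> maximals A" "is_pred L p s" and y: "y \<in> L" "y \<le> p"
        unfolding P_def down_def by blast
      then have "y < s" unfolding is_pred_def by (meson order_le_less_trans)
      moreover have "s \<in> A" using s(1) maximals_subset by blast
      ultimately show "y \<in> A - maximals A"
        using fin_gen_ideal_down_closed[OF A _ y(1)] unfolding maximals_def by auto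
    qed
  qed
  ultimately show ?thesis by (simp add: fin_gen_ideal_Union_down)
qed

definition peel :: "'a::order set \<Rightarrow> nat \<Rightarrow> 'a set" where
  "peel G k = ((\<lambda>A. A - maximals A) ^^ k) G"

lemma peel_0 [simp]: "peel G 0 = G"
  and peel_Suc [simp]: "peel G (Suc k) = peel G k - maximals (peel G k)"
  unfolding peel_def by simp_all

lemma peel_Diff_Suc: "peel G k - peel G (Suc k) = maximals (peel G k)"
  using maximals_subset by auto

lemma peel_subset: "peel G k \<subseteq> G"
  by (induction k) auto

lemma fin_gen_ideal_peel: "good L \<Longrightarrow> fin_gen_ideal L G \<Longrightarrow> fin_gen_ideal L (peel G k)"
  by (induction k) (auto intro: good_Diff_maximals)

lemma Inter_peel_empty:
  assumes ifin: "interval_finite L" and g: "good L" and G: "fin_gen_ideal L G"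
  shows "(\<Inter>k. peel G k) = {}"
proof (rule ccontr)
  assume "(\<Inter>k. peel G k) \<noteq> {}"
  then obtain x where x: "\<And>k. x \<in> peel G k" by blast
  define U where "U k = {y \<in> peel G k. x \<le> y}" for k
  have "x \<in> L" using x[of 0] fin_gen_ideal_subset[OF G] by auto
  have fin: "finite (U k)" for k
  proof (rule finite_subset)
    show "U k \<subseteq> {y \<in> G. x \<le> y}" using peel_subset unfolding U_def by blast
    show "finite {y \<in> G. x \<le> y}" by (rule interval_finite_finite_above[OF ifin G \<open>x \<in> L\<close>])
  qed
  have "U (Suc k) \<subset> U k" for k
  proof -
    obtain m where "m \<in> maximals (peel G k)" "x \<le> m"
      using fin_gen_ideal_below_maximal[OF fin_gen_ideal_peel[OF g G] x] by blast
    then have "m \<in> U k - U (Suc k)" unfolding U_def using maximals_subset by auto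
    moreover have "U (Suc k) \<subseteq> U k" unfolding U_def by auto
    ultimately show ?thesis by blast
  qed
  with fin have "\<forall>k. (U (Suc k), U k) \<in> finite_psubset" unfolding finite_psubset_def by simp
  moreover have "\<nexists>f. \<forall>k. (f (Suc k), f k) \<in> finite_psubset"
    using wf_finite_psubset by (simp add: wf_iff_no_infinite_down_chain)
  ultimately show False by blast
qed

lemma peel_exhausting_chain:
  assumes "interval_finite L" "good L" "fin_gen_ideal L G"
  shows "exhausting_chain L G (peel G)"
proof -
  have "finite (peel G k - peel G (Suc k))" for k
    unfolding peel_Diff_Suc
    using fin_gen_ideal_generates_maximals[OF fin_gen_ideal_peel] assms
    unfolding generates_def by blast
  then show ?thesis
    unfolding exhausting_chain_def
    using assms Inter_peel_empty fin_gen_ideal_peel by auto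
qed

lemma exhausting_chain_fin_gen_ideal: "exhausting_chain L G \<Gamma> \<Longrightarrow> fin_gen_ideal L (\<Gamma> k)"
  unfolding exhausting_chain_def by blast

lemma exhausting_chain_subset:
  assumes "exhausting_chain L G \<Gamma>" shows "\<Gamma> k \<subseteq> G"
  using assms unfolding exhausting_chain_def by (induction k) auto

lemma exhausting_chain_finite_Diff:
  assumes C: "exhausting_chain L G \<Gamma>" shows "finite (G - \<Gamma> n)"
proof (induction n)
  case 0 with C show ?case unfolding exhausting_chain_def by simp
next
  case (Suc n)
  have "G - \<Gamma> (Suc n) \<subseteq> (G - \<Gamma> n) \<union> (\<Gamma> n - \<Gamma> (Suc n))" by blast
  with Suc C show ?case unfolding exhausting_chain_def by (meson finite_UnI finite_subset)
qed

lemma exhausting_chain_escapes: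
  assumes "exhausting_chain L G \<Gamma>" obtains n where "x \<notin> \<Gamma> n"
  using assms unfolding exhausting_chain_def by blast

lemma interval_finite_if_exhausting_chains:
  assumes H: "\<And>G. fin_gen_ideal L G \<Longrightarrow> \<exists>\<Gamma>. exhausting_chain L G \<Gamma>"
  shows "interval_finite L"
  unfolding interval_finite_def
proof (intro ballI)
  fix m l assume m: "m \<in> L" and l: "l \<in> L"
  show "finite {p \<in> L. m \<le> p \<and> p \<le> l}"
  proof (cases "m \<le> l")
    case True
    obtain \<Gamma> where C: "exhausting_chain L (down L l) \<Gamma>"
      using H fin_gen_ideal_down[OF l] by blast
    obtain n where "m \<notin> \<Gamma> n" using exhausting_chain_escapes[OF C] .
    then have "{p \<in> L. m \<le> p \<and> p \<le> l} \<subseteq> down L l - \<Gamma> n"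
      using fin_gen_ideal_down_closed[OF exhausting_chain_fin_gen_ideal[OF C] _ m]
      unfolding down_def by blast
    then show ?thesis using exhausting_chain_finite_Diff[OF C] by (rule finite_subset)
  next
    case False
    then have empty: "{p \<in> L. m \<le> p \<and> p \<le> l} = {}" by (auto dest: order_trans)
    show ?thesis unfolding empty by simp
  qed
qed

lemma finite_preds_if_exhausting_chains:
  assumes H: "\<And>G. fin_gen_ideal L G \<Longrightarrow> \<exists>\<Gamma>. exhausting_chain L G \<Gamma>" and l: "l \<in> L"
  shows "finite {m. is_pred L m l}"
proof -
  obtain \<Gamma> where C: "exhausting_chain L (down L l) \<Gamma>"
    using H fin_gen_ideal_down[OF l] by blast
  obtain n where l_n: "l \<notin> \<Gamma> n" using exhausting_chain_escapes[OF C] .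
  obtain S where S: "generates L S (\<Gamma> n)"
    using exhausting_chain_fin_gen_ideal[OF C] unfolding fin_gen_ideal_def by blast
  have "{m. is_pred L m l} \<subseteq> (down L l - \<Gamma> n) \<union> S"
  proof
    fix p assume "p \<in> {m. is_pred L m l}"
    then have p: "is_pred L p l" by simp
    show "p \<in> (down L l - \<Gamma> n) \<union> S"
    proof (cases "p \<in> \<Gamma> n")
      case False with p show ?thesis unfolding is_pred_def down_def by auto
    next
      case True
      then obtain s where s: "s \<in> S" "p \<le> s" using S unfolding generates_def down_def by blast
      have "s \<in> \<Gamma> n" using S s(1) unfolding generates_def down_def by auto
      then have "s \<le> l" using exhausting_chain_subset[OF C] unfolding down_def by blast
      with l_n \<open>s \<in> \<Gamma> n\<close> have "s < l" by (auto simp: order_less_le)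
      with p s S have "p = s" unfolding is_pred_def generates_def by (auto simp: order_less_le)
      with s show ?thesis by blast
    qed
  qed
  moreover have "finite ((down L l - \<Gamma> n) \<union> S)"
    using exhausting_chain_finite_Diff[OF C] S unfolding generates_def by blast
  ultimately show ?thesis by (rule finite_subset)
qed

lemma interval_finite_pred_above:
  assumes ifin: "interval_finite L" and m: "m \<in> L" and l: "l \<in> L" and "m < l"
  shows "\<exists>l'. is_pred L l' l \<and> m \<le> l'"
proof -
  define I where "I = {p \<in> L. m \<le> p \<and> p < l}"
  have "finite {p \<in> L. m \<le> p \<and> p \<le> l}" using ifin m l unfolding interval_finite_def by blast
  moreover have "I \<subseteq> {p \<in> L. m \<le> p \<and> p \<le> l}" unfolding I_def by auto
  ultimately have "finite I" by (rule finite_subset[rotated])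
  moreover have "m \<in> I" using m \<open>m < l\<close> unfolding I_def by simp
  ultimately obtain q where q: "q \<in> I" "m \<le> q" and q_max: "\<And>b. b \<in> I \<Longrightarrow> q \<le> b \<Longrightarrow> q = b"
    by (metis finite_has_maximal2)
  have "\<not> q < p" if p: "p \<in> L" "p < l" for p
  proof
    assume "q < p"
    then have "m \<le> p" using q(2) by simp
    with p have "p \<in> I" unfolding I_def by simp
    from q_max[OF this less_imp_le[OF \<open>q < p\<close>]] \<open>q < p\<close> show False by simp
  qed
  moreover have "q \<in> L" "q < l" using q(1) unfolding I_def by simp_all
  ultimately have "is_pred L q l" unfolding is_pred_def using l by blast
  with q(2) show ?thesis by blast
qed

lemma goodI:
  assumes ifin: "interval_finite L" and fin: "\<And>l. l \<in> L \<Longrightarrow> finite {m. is_pred L m l}"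
  shows "good L"
proof -
  have "\<exists>l'. is_pred L l' l \<and> m \<le> l'" if "m \<in> L" "l \<in> L" "m < l" for m l
    using interval_finite_pred_above[OF ifin that] .
  then show ?thesis unfolding good_def using fin by blast
qed

theorem proposition2p3:
  fixes L :: "'a::order set"
  shows "((interval_finite L \<and> good L) \<longleftrightarrow>
           (\<forall>G. fin_gen_ideal L G \<longrightarrow> (\<exists>\<Gamma>. exhausting_chain L G \<Gamma>))) \<and>
         (interval_finite L \<and> good L \<longrightarrow>
           (\<forall>G. fin_gen_ideal L G \<longrightarrow>
             (\<exists>\<Gamma>. exhausting_chain L G \<Gamma> \<and>
                (\<forall>k. (\<forall>x\<in>\<Gamma> k - \<Gamma> (Suc k). is_generator L (\<Gamma> k) x) \<and>
                     (\<forall>x\<in>\<Gamma> k - \<Gamma> (Suc k). \<forall>y\<in>\<Gamma> k - \<Gamma> (Suc k).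
                          x \<le> y \<longrightarrow> x = y)))))"
proof -
  have "exhausting_chain L G (peel G) \<and>
          (\<forall>k. (\<forall>x\<in>peel G k - peel G (Suc k). is_generator L (peel G k) x) \<and>
               (\<forall>x\<in>peel G k - peel G (Suc k). \<forall>y\<in>peel G k - peel G (Suc k). x \<le> y \<longrightarrow> x = y))"
    if "interval_finite L" "good L" "fin_gen_ideal L G" for G
    using that peel_exhausting_chain fin_gen_ideal_peel fin_gen_ideal_maximal_is_generator
      maximals_antichain
    unfolding peel_Diff_Suc by blast
  moreover have "interval_finite L \<and> good L"
    if "\<forall>G. fin_gen_ideal L G \<longrightarrow> (\<exists>\<Gamma>. exhausting_chain L G \<Gamma>)"
    using that interval_finite_if_exhausting_chains finite_preds_if_exhausting_chains goodI
    by blast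
  ultimately show ?thesis by blast
qed

end
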